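(* Let $G$ be a finite group, $N$ a commutative monoid in sets, and let $\mathscr{D}=\mathbf{Set}(G,N)^{\mathrm{disc}}$ be the discrete $G$-category (no nonidentity morphisms) whose objects are the functions $f:G\to N$, with $G$-action $(g\cdot f)(x)=f(xg)$. If there is a nonequivariant category $\mathscr{C}$ such that $\mathscr{D}$ is $G$-equivalent to $\mathbf{Fun}(\mathbb{T}G,\mathscr{C})$, then the $G$-action on $\mathscr{D}$ is trivial.
   Context: The translation category $\mathbb{T}G$ has object set $G$ and a unique morphism $yx^{-1}:x\to y$ for all $x,y\in G$; right multiplication by $g$ gives functors $(-)g:\mathbb{T}G\to\mathbb{T}G$, making $\mathbb{T}G$ a right $G$-category. For a category $\mathscr{C}$ (trivial action), $\mathbf{Fun}(\mathbb{T}G,\mathscr{C})$ is the category of functors $\mathbb{T}G\to\mathscr{C}$ and natural transformations, with left $G$-action by precomposition: $(gC)_x=C_{xg}$, $(g\eta)_x=\eta_{xg}$. A $G$-equivalence is a $G$-equivariant functor $\Phi:\mathbf{Fun}(\mathbb{T}G,\mathscr{C})\to\mathscr{D}$ that is an equivalence of categories. *)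

theory Defs
  imports "HOL-Algebra.Group" "HOL-Library.FuncSet"
begin

record ('o, 'a) category =
  cObj  :: "'o set"
  cArr  :: "'a set"
  cDom  :: "'a \<Rightarrow> 'o"
  cCod  :: "'a \<Rightarrow> 'o"
  cId   :: "'o \<Rightarrow> 'a"
  cComp :: "'a \<Rightarrow> 'a \<Rightarrow> 'a"   (* cComp C g f = g o f *)

definition is_category :: "('o, 'a) category \<Rightarrow> bool" where
  "is_category C \<longleftrightarrow>
     (\<forall>f\<in>cArr C. cDom C f \<in> cObj C \<and> cCod C f \<in> cObj C) \<and>
     (\<forall>x\<in>cObj C. cId C x \<in> cArr C \<and> cDom C (cId C x) = x \<and> cCod C (cId C x) = x) \<and>
     (\<forall>f\<in>cArr C. \<forall>g\<in>cArr C. cCod C f = cDom C g \<longrightarrow>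
        cComp C g f \<in> cArr C \<and> cDom C (cComp C g f) = cDom C f \<and> cCod C (cComp C g f) = cCod C g) \<and>
     (\<forall>f\<in>cArr C. cComp C (cId C (cCod C f)) f = f \<and> cComp C f (cId C (cDom C f)) = f) \<and>
     (\<forall>f\<in>cArr C. \<forall>g\<in>cArr C. \<forall>h\<in>cArr C. cCod C f = cDom C g \<and> cCod C g = cDom C h \<longrightarrow>
        cComp C h (cComp C g f) = cComp C (cComp C h g) f)"

definition is_functor :: "('o1, 'a1) category \<Rightarrow> ('o2, 'a2) category
    \<Rightarrow> ('o1 \<Rightarrow> 'o2) \<times> ('a1 \<Rightarrow> 'a2) \<Rightarrow> bool" where
  "is_functor A B F \<longleftrightarrow>
     (\<forall>x\<in>cObj A. fst F x \<in> cObj B) \<and>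
     (\<forall>f\<in>cArr A. snd F f \<in> cArr B \<and> cDom B (snd F f) = fst F (cDom A f)
                 \<and> cCod B (snd F f) = fst F (cCod A f)) \<and>
     (\<forall>x\<in>cObj A. snd F (cId A x) = cId B (fst F x)) \<and>
     (\<forall>f\<in>cArr A. \<forall>g\<in>cArr A. cCod A f = cDom A g \<longrightarrow>
        snd F (cComp A g f) = cComp B (snd F g) (snd F f))"

definition is_nat_trans :: "('o1, 'a1) category \<Rightarrow> ('o2, 'a2) category
    \<Rightarrow> ('o1 \<Rightarrow> 'o2) \<times> ('a1 \<Rightarrow> 'a2) \<Rightarrow> ('o1 \<Rightarrow> 'o2) \<times> ('a1 \<Rightarrow> 'a2)
    \<Rightarrow> ('o1 \<Rightarrow> 'a2) \<Rightarrow> bool" where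
  "is_nat_trans A B F F' \<eta> \<longleftrightarrow>
     (\<forall>x\<in>cObj A. \<eta> x \<in> cArr B \<and> cDom B (\<eta> x) = fst F x \<and> cCod B (\<eta> x) = fst F' x) \<and>
     (\<forall>f\<in>cArr A. cComp B (\<eta> (cCod A f)) (snd F f) = cComp B (snd F' f) (\<eta> (cDom A f)))"

definition is_iso :: "('o, 'a) category \<Rightarrow> 'a \<Rightarrow> bool" where
  "is_iso C f \<longleftrightarrow> f \<in> cArr C \<and>
     (\<exists>g\<in>cArr C. cDom C g = cCod C f \<and> cCod C g = cDom C f \<and>
        cComp C g f = cId C (cDom C f) \<and> cComp C f g = cId C (cCod C f))"

definition id_functor :: "('o \<Rightarrow> 'o) \<times> ('a \<Rightarrow> 'a)" where
  "id_functor = (id, id)"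

definition comp_functor :: "('o2 \<Rightarrow> 'o3) \<times> ('a2 \<Rightarrow> 'a3) \<Rightarrow> ('o1 \<Rightarrow> 'o2) \<times> ('a1 \<Rightarrow> 'a2)
    \<Rightarrow> ('o1 \<Rightarrow> 'o3) \<times> ('a1 \<Rightarrow> 'a3)" where
  "comp_functor H F = (fst H \<circ> fst F, snd H \<circ> snd F)"

definition is_equivalence :: "('o1, 'a1) category \<Rightarrow> ('o2, 'a2) category
    \<Rightarrow> ('o1 \<Rightarrow> 'o2) \<times> ('a1 \<Rightarrow> 'a2) \<Rightarrow> bool" where
  "is_equivalence A B F \<longleftrightarrow> is_functor A B F \<and>
     (\<exists>H. is_functor B A H \<and>
        (\<exists>\<eta>. is_nat_trans A A id_functor (comp_functor H F) \<eta> \<and> (\<forall>x\<in>cObj A. is_iso A (\<eta> x))) \<and>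
        (\<exists>\<epsilon>. is_nat_trans B B (comp_functor F H) id_functor \<epsilon> \<and> (\<forall>y\<in>cObj B. is_iso B (\<epsilon> y))))"

text \<open>Functor category Fun(A,B): objects are functors (extensional, i.e. undefined
  outside the objects / arrows of A), arrows are triples (source, components, target).\<close>
type_synonym ('o1, 'a1, 'o2, 'a2) fobj = "('o1 \<Rightarrow> 'o2) \<times> ('a1 \<Rightarrow> 'a2)"
type_synonym ('o1, 'a1, 'o2, 'a2) farr =
  "('o1, 'a1, 'o2, 'a2) fobj \<times> ('o1 \<Rightarrow> 'a2) \<times> ('o1, 'a1, 'o2, 'a2) fobj"

definition funcat :: "('o1, 'a1) category \<Rightarrow> ('o2, 'a2) category
    \<Rightarrow> (('o1, 'a1, 'o2, 'a2) fobj, ('o1, 'a1, 'o2, 'a2) farr) category" where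
  "funcat A B =
     \<lparr> cObj = {F. is_functor A B F \<and> fst F \<in> extensional (cObj A) \<and> snd F \<in> extensional (cArr A)},
       cArr = {(F, \<eta>, F'). is_functor A B F \<and> fst F \<in> extensional (cObj A) \<and> snd F \<in> extensional (cArr A)
                \<and> is_functor A B F' \<and> fst F' \<in> extensional (cObj A) \<and> snd F' \<in> extensional (cArr A)
                \<and> is_nat_trans A B F F' \<eta> \<and> \<eta> \<in> extensional (cObj A)},
       cDom = (\<lambda>(F, \<eta>, F'). F),
       cCod = (\<lambda>(F, \<eta>, F'). F'),
       cId = (\<lambda>F. (F, \<lambda>x\<in>cObj A. cId B (fst F x), F)),
       cComp = (\<lambda>(G, \<theta>, G') (F, \<eta>, F'). (F, \<lambda>x\<in>cObj A. cComp B (\<theta> x) (\<eta> x), G')) \<rparr>"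

text \<open>The translation category TG: objects are the elements of G; the unique morphism
  y x^-1 : x \<rightarrow> y is represented by the pair (x, y).\<close>
definition tcat :: "('g, 'b) monoid_scheme \<Rightarrow> ('g, 'g \<times> 'g) category" where
  "tcat G = \<lparr> cObj = carrier G, cArr = carrier G \<times> carrier G,
              cDom = fst, cCod = snd, cId = (\<lambda>x. (x, x)),
              cComp = (\<lambda>g f. (fst f, snd g)) \<rparr>"

definition act_fobj :: "('g, 'b) monoid_scheme \<Rightarrow> 'g
    \<Rightarrow> ('g, 'g \<times> 'g, 'o, 'a) fobj \<Rightarrow> ('g, 'g \<times> 'g, 'o, 'a) fobj" where
  "act_fobj G g F = ((\<lambda>x\<in>carrier G. fst F (x \<otimes>\<^bsub>G\<^esub> g)),
                     (\<lambda>p\<in>carrier G \<times> carrier G. snd F (fst p \<otimes>\<^bsub>G\<^esub> g, snd p \<otimes>\<^bsub>G\<^esub> g)))"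

definition act_farr :: "('g, 'b) monoid_scheme \<Rightarrow> 'g
    \<Rightarrow> ('g, 'g \<times> 'g, 'o, 'a) farr \<Rightarrow> ('g, 'g \<times> 'g, 'o, 'a) farr" where
  "act_farr G g \<alpha> = (case \<alpha> of (F, \<eta>, F') \<Rightarrow>
      (act_fobj G g F, (\<lambda>x\<in>carrier G. \<eta> (x \<otimes>\<^bsub>G\<^esub> g)), act_fobj G g F'))"

text \<open>Discrete category on a set S (arrows = identities, represented by objects).\<close>
definition disc_cat :: "'o set \<Rightarrow> ('o, 'o) category" where
  "disc_cat S = \<lparr> cObj = S, cArr = S, cDom = id, cCod = id, cId = id,
                  cComp = (\<lambda>g f. f) \<rparr>"

text \<open>Set(G,N): functions G \<rightarrow> N (extensional outside carrier G), N = the whole type.\<close>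
definition setGN :: "('g, 'b) monoid_scheme \<Rightarrow> ('g \<Rightarrow> 'n) set" where
  "setGN G = (carrier G \<rightarrow>\<^sub>E (UNIV :: 'n set))"

definition act_setGN :: "('g, 'b) monoid_scheme \<Rightarrow> 'g \<Rightarrow> ('g \<Rightarrow> 'n) \<Rightarrow> ('g \<Rightarrow> 'n)" where
  "act_setGN G g f = (\<lambda>x\<in>carrier G. f (x \<otimes>\<^bsub>G\<^esub> g))"

end

theory Submission
  imports Defs
begin

text \<open>Every object X of Fun(TG,C) is joined to its translate gX by the arrow with components
  X(x \<rightarrow> xg). A functor into a discrete category cannot separate the two ends of an arrow, so an
  equivariant equivalence \<Phi> gives \<Phi> X = \<Phi> (gX) = g \<Phi> X; and every object of the discrete target
  is of the form \<Phi> X, because the counit of the equivalence consists of identities.\<close>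

lemma tcat_simps [simp]:
  "cObj (tcat G) = carrier G" "cArr (tcat G) = carrier G \<times> carrier G"
  "cDom (tcat G) = fst" "cCod (tcat G) = snd" "cId (tcat G) = (\<lambda>x. (x, x))"
  "cComp (tcat G) = (\<lambda>g f. (fst f, snd g))"
  by (simp_all add: tcat_def)

lemma disc_cat_simps [simp]:
  "cObj (disc_cat S) = S" "cArr (disc_cat S) = S" "cDom (disc_cat S) = id" "cCod (disc_cat S) = id"
  by (simp_all add: disc_cat_def)

lemma is_functor_tcatI:
  assumes "\<And>x. x \<in> carrier G \<Longrightarrow> fst F x \<in> cObj C"
    and "\<And>a b. a \<in> carrier G \<Longrightarrow> b \<in> carrier G \<Longrightarrow> snd F (a, b) \<in> cArr C"
    and "\<And>a b. a \<in> carrier G \<Longrightarrow> b \<in> carrier G \<Longrightarrow> cDom C (snd F (a, b)) = fst F a"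
    and "\<And>a b. a \<in> carrier G \<Longrightarrow> b \<in> carrier G \<Longrightarrow> cCod C (snd F (a, b)) = fst F b"
    and "\<And>x. x \<in> carrier G \<Longrightarrow> snd F (x, x) = cId C (fst F x)"
    and "\<And>a b c. a \<in> carrier G \<Longrightarrow> b \<in> carrier G \<Longrightarrow> c \<in> carrier G \<Longrightarrow>
           snd F (a, c) = cComp C (snd F (b, c)) (snd F (a, b))"
  shows "is_functor (tcat G) C F"
  unfolding is_functor_def tcat_simps
proof (intro conjI ballI impI)
  fix f h assume "f \<in> carrier G \<times> carrier G" "h \<in> carrier G \<times> carrier G" "snd f = fst h"
  then obtain a b c where "f = (a, b)" "h = (b, c)" "a \<in> carrier G" "b \<in> carrier G" "c \<in> carrier G"
    by (metis mem_Times_iff prod.collapse)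
  then show "snd F (fst f, snd h) = cComp C (snd F h) (snd F f)"
    using assms(6)[of a b c] by simp
qed (use assms(1-5) in auto)

lemma is_functor_tcatD:
  assumes "is_functor (tcat G) C F" and "a \<in> carrier G" and "b \<in> carrier G"
  shows "fst F a \<in> cObj C" and "snd F (a, b) \<in> cArr C"
    and "cDom C (snd F (a, b)) = fst F a" and "cCod C (snd F (a, b)) = fst F b"
    and "snd F (a, a) = cId C (fst F a)"
    and "c \<in> carrier G \<Longrightarrow> snd F (a, c) = cComp C (snd F (b, c)) (snd F (a, b))"
proof -
  note F = assms(1)[unfolded is_functor_def tcat_simps]
  have ab: "(a, b) \<in> carrier G \<times> carrier G" using assms(2,3) by simp
  show "fst F a \<in> cObj C" "snd F (a, b) \<in> cArr C"
    "cDom C (snd F (a, b)) = fst F a" "cCod C (snd F (a, b)) = fst F b"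
    "snd F (a, a) = cId C (fst F a)"
    using F[THEN conjunct1] F[THEN conjunct2, THEN conjunct1, rule_format, OF ab]
      F[THEN conjunct2, THEN conjunct2, THEN conjunct1] assms(2)
    by simp_all
  assume "c \<in> carrier G"
  then have "(b, c) \<in> carrier G \<times> carrier G" using assms(3) by simp
  then show "snd F (a, c) = cComp C (snd F (b, c)) (snd F (a, b))"
    using F[THEN conjunct2, THEN conjunct2, THEN conjunct2, rule_format, OF ab, of "(b, c)"] by simp
qed

lemma is_functor_tcat_act_fobj:
  assumes "monoid G" and "g \<in> carrier G" and F: "is_functor (tcat G) C F"
  shows "is_functor (tcat G) C (act_fobj G g F)"
proof (rule is_functor_tcatI)
  have closed: "\<And>x. x \<in> carrier G \<Longrightarrow> x \<otimes>\<^bsub>G\<^esub> g \<in> carrier G"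
    using assms(1,2) by (simp add: monoid.m_closed)
  fix a b c assume abc: "a \<in> carrier G" "b \<in> carrier G" "c \<in> carrier G"
  show "snd (act_fobj G g F) (a, c) =
      cComp C (snd (act_fobj G g F) (b, c)) (snd (act_fobj G g F) (a, b))"
    using is_functor_tcatD(6)[OF F closed[OF abc(1)] closed[OF abc(2)] closed[OF abc(3)]] abc
    by (simp add: act_fobj_def)
qed (use assms is_functor_tcatD(1-5)[OF F] in \<open>simp_all add: act_fobj_def monoid.m_closed\<close>)

lemma is_nat_trans_tcat_to_act_fobj:
  assumes "monoid G" and "g \<in> carrier G" and F: "is_functor (tcat G) C F"
  shows "is_nat_trans (tcat G) C F (act_fobj G g F) (\<lambda>x\<in>carrier G. snd F (x, x \<otimes>\<^bsub>G\<^esub> g))"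
proof -
  have closed: "\<And>x. x \<in> carrier G \<Longrightarrow> x \<otimes>\<^bsub>G\<^esub> g \<in> carrier G"
    using assms(1,2) by (simp add: monoid.m_closed)
  text \<open>Both sides of the naturality square at a \<rightarrow> b are the component F(a \<rightarrow> bg).\<close>
  have "cComp C (snd F (b, b \<otimes>\<^bsub>G\<^esub> g)) (snd F (a, b)) =
      cComp C (snd F (a \<otimes>\<^bsub>G\<^esub> g, b \<otimes>\<^bsub>G\<^esub> g)) (snd F (a, a \<otimes>\<^bsub>G\<^esub> g))"
    if "a \<in> carrier G" "b \<in> carrier G" for a b
    using is_functor_tcatD(6)[OF F that closed[OF that(2)]]
      is_functor_tcatD(6)[OF F that(1) closed[OF that(1)] closed[OF that(2)]]
    by simp
  then show ?thesis
    unfolding is_nat_trans_def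
    using is_functor_tcatD(1-5)[OF F] closed by (auto simp: act_fobj_def)
qed

lemma funcat_arr_to_act_fobj:
  assumes "monoid G" and "g \<in> carrier G" and "X \<in> cObj (funcat (tcat G) C)"
  shows "(X, \<lambda>x\<in>carrier G. snd X (x, x \<otimes>\<^bsub>G\<^esub> g), act_fobj G g X) \<in> cArr (funcat (tcat G) C)"
proof -
  have X: "is_functor (tcat G) C X" "fst X \<in> extensional (carrier G)" "snd X \<in> extensional (carrier G \<times> carrier G)"
    using assms(3) by (simp_all add: funcat_def)
  show ?thesis
    using X is_functor_tcat_act_fobj[OF assms(1,2) X(1)] is_nat_trans_tcat_to_act_fobj[OF assms(1,2) X(1)]
    by (simp add: funcat_def act_fobj_def)
qed

lemma functor_to_disc_cat_dom_eq_cod: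
  assumes "is_functor A (disc_cat S) F" and "f \<in> cArr A"
  shows "fst F (cDom A f) = fst F (cCod A f)"
  using assms unfolding is_functor_def by auto

lemma equivalence_to_disc_cat_surj:
  assumes "is_equivalence A (disc_cat S) F" and "y \<in> S"
  shows "\<exists>x\<in>cObj A. fst F x = y"
proof -
  obtain H \<epsilon> where H: "is_functor (disc_cat S) A H"
    and \<epsilon>: "is_nat_trans (disc_cat S) (disc_cat S) (comp_functor F H) id_functor \<epsilon>"
    using assms(1) unfolding is_equivalence_def by blast
  have "fst F (fst H y) = y"
    using \<epsilon> assms(2) unfolding is_nat_trans_def comp_functor_def id_functor_def by auto
  moreover have "fst H y \<in> cObj A"
    using H assms(2) unfolding is_functor_def by auto
  ultimately show ?thesis by blast
qed

theorem proposition2p20: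
  fixes G :: "('g, 'b) monoid_scheme"
    and C :: "('o, 'a) category"
    and \<Phi> :: "('g, 'g \<times> 'g, 'o, 'a) fobj \<Rightarrow> ('g \<Rightarrow> 'n::comm_monoid_mult)"
    and \<Phi>a :: "('g, 'g \<times> 'g, 'o, 'a) farr \<Rightarrow> ('g \<Rightarrow> 'n)"
  assumes "group G"
    and "finite (carrier G)"
    and "is_category C"
    and "is_equivalence (funcat (tcat G) C) (disc_cat (setGN G)) (\<Phi>, \<Phi>a)"
    and "\<forall>g\<in>carrier G. \<forall>X\<in>cObj (funcat (tcat G) C).
           \<Phi> (act_fobj G g X) = act_setGN G g (\<Phi> X)"
    and "\<forall>g\<in>carrier G. \<forall>\<alpha>\<in>cArr (funcat (tcat G) C).
           \<Phi>a (act_farr G g \<alpha>) = act_setGN G g (\<Phi>a \<alpha>)"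
  shows "\<forall>g\<in>carrier G. \<forall>f\<in>(setGN G :: ('g \<Rightarrow> 'n) set). act_setGN G g f = f"
proof (intro ballI)
  fix g f
  assume g: "g \<in> carrier G" and f: "f \<in> (setGN G :: ('g \<Rightarrow> 'n) set)"
  obtain X where X: "X \<in> cObj (funcat (tcat G) C)" and "\<Phi> X = f"
    using equivalence_to_disc_cat_surj[OF assms(4) f] by auto
  have \<Phi>: "is_functor (funcat (tcat G) C) (disc_cat (setGN G)) (\<Phi>, \<Phi>a)"
    using assms(4) unfolding is_equivalence_def by blast
  have "\<Phi> X = \<Phi> (act_fobj G g X)"
    using functor_to_disc_cat_dom_eq_cod[OF \<Phi>
        funcat_arr_to_act_fobj[OF group.is_monoid[OF assms(1)] g X]]
    by (simp add: funcat_def)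
  also have "\<dots> = act_setGN G g (\<Phi> X)"
    using assms(5) g X by blast
  finally show "act_setGN G g f = f"
    using \<open>\<Phi> X = f\<close> by simp
qed

end
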